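(* Consider the following single-NFT sale model. A creator with cost $c\ge 0$ chooses a mint price $p_0\ge 0$ and a royalty rate $r\in[0,1]$. The end-buyer's valuation is a nonnegative random variable $V$ with finite mean $\mu=\mathbb{E}[V]$, whose distribution (but not realization) is known to both the creator and a speculator at the time of purchase. The speculator is risk neutral ($\eta_s=0$) and buys the NFT at price $p_0$ if and only if $(1-r)\mu-p_0\ge 0$; if he buys, he later resells it to the end-buyer at the realized value $V$, and the creator's profit is $p_0+rV-c$. If the speculator does not buy, the creator offers the NFT to the end-buyer at price $p_0$, who buys iff $V\ge p_0$, so the creator's profit is $p_0\mathbb{1}_{\{V\ge p_0\}}-c$. The creator is risk neutral ($\eta_c=0$) and maximizes expected profit. Then every pair $(p_0^*,r^* )$ with $r^*\in[0,1]$, $p_0^*\ge 0$ and $p_0^*=\mu(1-r^* )$ maximizes the creator's expected profit, and the maximal expected profit equals $\mu-c$. *)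

theory Defs
  imports "HOL-Probability.Probability"
begin

definition creator_expected_profit ::
  "'a measure \<Rightarrow> ('a \<Rightarrow> real) \<Rightarrow> real \<Rightarrow> real \<Rightarrow> real \<Rightarrow> real" where
  "creator_expected_profit M V c p0 r =
     (if (1 - r) * (\<integral>x. V x \<partial>M) - p0 \<ge> 0
      then (\<integral>x. p0 + r * V x - c \<partial>M)
      else (\<integral>x. p0 * indicator {y \<in> space M. V y \<ge> p0} x - c \<partial>M))"

end

theory Submission
  imports Defs
begin

text \<open>If the speculator buys, the creator receives p0 + r V - c, whose expectation is at
most \<mu> - c exactly because the speculator's participation constraint p0 \<le> (1 - r) \<mu> holds;
at p0 = (1 - r) \<mu> it is tight, so the whole surplus \<mu> goes to the creator. If he does not
buy, the posted-price revenue p0 1{V \<ge> p0} is pointwise below the nonnegative valuation V,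
so again the expected profit is at most \<mu> - c. This bound holds for every p0 and r.\<close>

lemma (in prob_space) integral_affine:
  fixes V :: "'a \<Rightarrow> real"
  assumes "integrable M V"
  shows "(\<integral>x. a + b * V x - c \<partial>M) = a + b * (\<integral>x. V x \<partial>M) - c"
proof -
  have "(\<integral>x. a + b * V x - c \<partial>M) = (\<integral>x. a + b * V x \<partial>M) - (\<integral>x. c \<partial>M)"
    using assms by (intro Bochner_Integration.integral_diff) auto
  also have "(\<integral>x. a + b * V x \<partial>M) = (\<integral>x. a \<partial>M) + (\<integral>x. b * V x \<partial>M)"
    using assms by (intro Bochner_Integration.integral_add) auto
  finally show ?thesis
    using prob_space by simp
qed

lemma (in finite_measure) integrable_posted_price_revenue:
  assumes "V \<in> borel_measurable M"
  shows "integrable M (\<lambda>x. p * indicator {y \<in> space M. V y \<ge> p} x :: real)"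
proof -
  have "{y \<in> space M. V y \<ge> p} \<in> sets M"
    using assms by measurable
  then show ?thesis
    by (intro integrable_mult_right integrable_real_indicator)
      (simp_all add: emeasure_finite top.not_eq_extremum[symmetric])
qed

lemma (in finite_measure) posted_price_revenue_le_expectation:
  fixes V :: "'a \<Rightarrow> real"
  assumes V: "integrable M V" and nonneg: "AE x in M. V x \<ge> 0"
  shows "(\<integral>x. p * indicator {y \<in> space M. V y \<ge> p} x \<partial>M) \<le> (\<integral>x. V x \<partial>M)"
proof (rule integral_mono_AE[OF _ V])
  show "integrable M (\<lambda>x. p * indicator {y \<in> space M. V y \<ge> p} x)"
    using borel_measurable_integrable[OF V] by (rule integrable_posted_price_revenue)
  show "AE x in M. p * indicator {y \<in> space M. V y \<ge> p} x \<le> V x"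
    using nonneg by eventually_elim (auto simp: indicator_def)
qed

lemma creator_expected_profit_le_surplus:
  assumes "prob_space M" and V: "integrable M V" and nonneg: "AE x in M. V x \<ge> 0"
  shows "creator_expected_profit M V c p0 r \<le> (\<integral>x. V x \<partial>M) - c"
proof -
  interpret prob_space M by fact
  define \<mu> where "\<mu> = (\<integral>x. V x \<partial>M)"
  define S where "S = {y \<in> space M. V y \<ge> p0}"
  show ?thesis
  proof (cases "(1 - r) * \<mu> - p0 \<ge> 0")
    case True
    then show ?thesis
      using integral_affine[OF V, of p0 r c]
      by (simp add: creator_expected_profit_def \<mu>_def[symmetric] algebra_simps)
  next
    case False
    have "(\<integral>x. p0 * indicator S x \<partial>M) \<le> \<mu>"
      unfolding S_def \<mu>_def by (rule posted_price_revenue_le_expectation[OF V nonneg])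
    moreover have "integrable M (\<lambda>x. p0 * indicator S x)"
      unfolding S_def using borel_measurable_integrable[OF V] by (rule integrable_posted_price_revenue)
    ultimately show ?thesis
      using False prob_space
      by (simp add: creator_expected_profit_def \<mu>_def[symmetric] S_def[symmetric]
          Bochner_Integration.integral_diff)
  qed
qed

lemma creator_expected_profit_full_extraction:
  assumes "prob_space M" and "integrable M V" and "p0 = (\<integral>x. V x \<partial>M) * (1 - r)"
  shows "creator_expected_profit M V c p0 r = (\<integral>x. V x \<partial>M) - c"
proof -
  interpret prob_space M by fact
  show ?thesis
    using assms(3) integral_affine[OF assms(2), of p0 r c]
    by (simp add: creator_expected_profit_def algebra_simps)
qed

theorem theorem1:
  fixes M :: "'a measure" and V :: "'a \<Rightarrow> real" and c p0s rs :: real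
  assumes "prob_space M"
    and "V \<in> borel_measurable M"
    and "AE x in M. V x \<ge> 0"
    and "integrable M V"
    and "c \<ge> 0"
    and "rs \<in> {0..1}"
    and "p0s \<ge> 0"
    and "p0s = (\<integral>x. V x \<partial>M) * (1 - rs)"
  shows "(\<forall>p0 r. p0 \<ge> 0 \<longrightarrow> r \<in> {0..1} \<longrightarrow>
            creator_expected_profit M V c p0 r \<le> creator_expected_profit M V c p0s rs)
         \<and> creator_expected_profit M V c p0s rs = (\<integral>x. V x \<partial>M) - c"
  using creator_expected_profit_le_surplus[OF assms(1,4,3)]
    creator_expected_profit_full_extraction[OF assms(1,4,8)]
  by simp

end
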